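(* Let $X\subseteq\mathbb{C}^n$ be a complex analytic set, $x\in X$, $\mathcal M\subseteq\mathcal O_{X,x}^p$ a submodule and $k\in\mathbb N$. Then, at $(x,x)$: (a) $I_\Delta^{k}\,J_2\big((J_k(\mathcal M))_D\big)\subseteq J_{2k}(\mathcal M_D)$; (b) if $J_k(\mathcal M)$ is a principal ideal, then $I_\Delta^{k-1}\,J_2\big((J_k(\mathcal M))_D\big)\subseteq J_{2k}(\mathcal M_D)$.
   Context: $z_1,\dots,z_n$ are coordinates on $\mathbb C^n$; $\pi_1,\pi_2:X\times X\to X$ are the projections, and $I_\Delta=(z_1\circ\pi_1-z_1\circ\pi_2,\dots,z_n\circ\pi_1-z_n\circ\pi_2)$ is the ideal of the diagonal in $\mathcal O_{X\times X}$. For $h\in\mathcal O_X^q$, $h_D=(h\circ\pi_1,h\circ\pi_2)\in\mathcal O^{2q}_{X\times X}$; for a submodule or ideal $N\subseteq\mathcal O_X^q$, $N_D$ is the submodule of $\mathcal O^{2q}_{X\times X}$ generated by $\{h_D:h\in N\}$. $J_m(N)$ is the ideal generated by the $m\times m$ minors of a matrix of generators of $N$ (so $J_k(\mathcal M)$ is an ideal of $\mathcal O_X$, $(J_k(\mathcal M))_D\subseteq\mathcal O^2_{X\times X}$, and $J_2$ of it is an ideal). *)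

theory Defs
  imports "HOL-Analysis.Analysis"
begin

definition holo_on :: "(complex^'m \<Rightarrow> complex) \<Rightarrow> (complex^'m) set \<Rightarrow> bool" where
  "holo_on F U \<longleftrightarrow> open U \<and>
     (\<forall>z\<in>U. \<exists>c::complex^'m. (F has_derivative (\<lambda>v. \<Sum>i\<in>UNIV. c$i * v$i)) (at z))"

definition holo_at :: "(complex^'m \<Rightarrow> complex) \<Rightarrow> complex^'m \<Rightarrow> bool" where
  "holo_at F a \<longleftrightarrow> (\<exists>U. a \<in> U \<and> holo_on F U)"

definition analytic_set :: "(complex^'n) set \<Rightarrow> bool" where
  "analytic_set X \<longleftrightarrow> (\<exists>\<Omega>. open \<Omega> \<and> X \<subseteq> \<Omega> \<and>
     (\<forall>y\<in>\<Omega>. \<exists>U gs. open U \<and> y \<in> U \<and> U \<subseteq> \<Omega> \<and> (\<forall>g\<in>set gs. holo_on g U) \<and>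
        X \<inter> U = {z\<in>U. \<forall>g\<in>set gs. g z = 0}))"

text \<open>Membership of (a representative of) a germ F in the ideal of O_{A,a} generated
by G: F is holomorphic near a and agrees on A near a with a combination of finitely
many generators with holomorphic coefficients.\<close>
definition in_ideal_at :: "(complex^'m) set \<Rightarrow> complex^'m \<Rightarrow> (complex^'m \<Rightarrow> complex) set
     \<Rightarrow> (complex^'m \<Rightarrow> complex) \<Rightarrow> bool" where
  "in_ideal_at A a G F \<longleftrightarrow> holo_at F a \<and>
     (\<exists>(N::nat) gs cs W. open W \<and> a \<in> W \<and> (\<forall>i<N. gs i \<in> G \<and> holo_at (cs i) a) \<and>
        (\<forall>z\<in>W \<inter> A. F z = (\<Sum>i<N. cs i z * gs i z)))"

definition gen_module :: "complex^'m \<Rightarrow> (complex^'m \<Rightarrow> complex^'q) set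
     \<Rightarrow> (complex^'m \<Rightarrow> complex^'q) set" where
  "gen_module a S = {G. \<exists>(N::nat) hs cs. (\<forall>i<N. hs i \<in> S \<and> holo_at (cs i) a) \<and>
        G = (\<lambda>z. \<Sum>i<N. cs i z *s hs i z)}"

definition detn :: "nat \<Rightarrow> (nat \<Rightarrow> nat \<Rightarrow> complex) \<Rightarrow> complex" where
  "detn k A = (\<Sum>\<sigma> | \<sigma> permutes {..<k}. of_int (sign \<sigma>) * (\<Prod>i<k. A i (\<sigma> i)))"

definition minors :: "nat \<Rightarrow> ('a \<Rightarrow> complex^'q) set \<Rightarrow> ('a \<Rightarrow> complex) set" where
  "minors m S = {(\<lambda>z. detn m (\<lambda>i j. (hs j z) $ (r i))) | hs r. \<forall>j<m. hs j \<in> S}"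

definition Jideal :: "(complex^'m) set \<Rightarrow> complex^'m \<Rightarrow> nat \<Rightarrow> (complex^'m \<Rightarrow> complex^'q) set
     \<Rightarrow> (complex^'m \<Rightarrow> complex) set" where
  "Jideal A a m S = {F. in_ideal_at A a (minors m S) F}"

definition germ_submodule :: "complex^'n \<Rightarrow> (complex^'n \<Rightarrow> complex^'p) set \<Rightarrow> bool" where
  "germ_submodule x M \<longleftrightarrow> (\<forall>h\<in>M. \<forall>i. holo_at (\<lambda>z. h z $ i) x) \<and> (\<lambda>z. 0) \<in> M \<and>
     (\<forall>h\<in>M. \<forall>g\<in>M. (\<lambda>z. h z + g z) \<in> M) \<and>
     (\<forall>c h. holo_at c x \<longrightarrow> h \<in> M \<longrightarrow> (\<lambda>z. c z *s h z) \<in> M)"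

text \<open>C^n x C^n is identified with complex^('n + 'n).\<close>
definition pr1 :: "complex^('n + 'n) \<Rightarrow> complex^'n" where "pr1 z = (\<chi> i. z $ Inl i)"
definition pr2 :: "complex^('n + 'n) \<Rightarrow> complex^'n" where "pr2 z = (\<chi> i. z $ Inr i)"
definition diagpt :: "complex^'n \<Rightarrow> complex^('n + 'n)" where
  "diagpt x = (\<chi> i. case i of Inl j \<Rightarrow> x $ j | Inr j \<Rightarrow> x $ j)"
definition sqset :: "(complex^'n) set \<Rightarrow> (complex^('n + 'n)) set" where
  "sqset X = {z. pr1 z \<in> X \<and> pr2 z \<in> X}"

text \<open>h_D for h in O^p, and for h in O (an element of O^2).\<close>
definition dbl :: "(complex^'n \<Rightarrow> complex^'p) \<Rightarrow> complex^('n + 'n) \<Rightarrow> complex^('p + 'p)" where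
  "dbl h z = (\<chi> i. case i of Inl j \<Rightarrow> h (pr1 z) $ j | Inr j \<Rightarrow> h (pr2 z) $ j)"
definition dblS :: "(complex^'n \<Rightarrow> complex) \<Rightarrow> complex^('n + 'n) \<Rightarrow> complex^2" where
  "dblS h z = (\<chi> i. if i = 1 then h (pr1 z) else h (pr2 z))"

definition modD :: "complex^'n \<Rightarrow> (complex^'n \<Rightarrow> complex^'p) set
     \<Rightarrow> (complex^('n + 'n) \<Rightarrow> complex^('p + 'p)) set" where
  "modD x M = gen_module (diagpt x) (dbl ` M)"
definition idealD :: "complex^'n \<Rightarrow> (complex^'n \<Rightarrow> complex) set
     \<Rightarrow> (complex^('n + 'n) \<Rightarrow> complex^2) set" where
  "idealD x N = gen_module (diagpt x) (dblS ` N)"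

text \<open>Generators of I_Delta^j * I, where I is generated by G.\<close>
definition diag_pow_times :: "nat \<Rightarrow> (complex^('n::finite + 'n) \<Rightarrow> complex) set
     \<Rightarrow> (complex^('n + 'n) \<Rightarrow> complex) set" where
  "diag_pow_times j G = {(\<lambda>z. (\<Prod>l<j. z $ Inl (\<iota> l) - z $ Inr (\<iota> l)) * g z) | \<iota> g. g \<in> G}"

end

(*
  For h, h' in J_k(M), each a combination of k x k minors of M, and holomorphic c_0, ..., c_{k-1},
  the function prod_l (c_l o pi_1 - c_l o pi_2) * (h o pi_1) * (h' o pi_2) is a combination of
  2k x 2k minors of M_D: the columns ((c_l o pi_1 - c_l o pi_2) (f_l o pi_1), 0), which equal
  (c_l f_l)_D - (c_l o pi_2) (f_l)_D, together with the columns (f'_l)_D form a block triangular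
  matrix whose diagonal blocks are the minors of the f_l at pi_1 and of the f'_l at pi_2.
  Antisymmetrising in h, h' gives the 2 x 2 minors of (h_D, h'_D), which generate, up to sign,
  the 2 x 2 minors of (J_k(M))_D; taking the c_l to be coordinate functions yields (a).
  If J_k(M) = (g), then h = a g and h' = b g, and the 2 x 2 minor of (h_D, h'_D) equals
  g_1 g_2 (b_2 (a_1 - a_2) - a_2 (b_1 - b_2)), so a_1 - a_2 can play the role of the k-th
  coordinate difference, which gives (b).
*)

theory Submission
  imports Defs "Jordan_Normal_Form.Determinant"
begin

no_notation Matrix.vec_index (infixl \<open>$\<close> 100)

section \<open>Holomorphic germs\<close>

definition cdiff_at :: "(complex^'m \<Rightarrow> complex) \<Rightarrow> complex^'m \<Rightarrow> bool" where
  "cdiff_at F z \<longleftrightarrow> (\<exists>c. (F has_derivative (\<lambda>v. \<Sum>i\<in>UNIV. c$i * v$i)) (at z))"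

lemma holo_at_iff: "holo_at F a \<longleftrightarrow> (\<exists>U. open U \<and> a \<in> U \<and> (\<forall>z\<in>U. cdiff_at F z))"
  unfolding holo_at_def holo_on_def cdiff_at_def by blast

lemma holo_at_lift2:
  assumes "holo_at F a" "holo_at G a"
    and "\<And>z. cdiff_at F z \<Longrightarrow> cdiff_at G z \<Longrightarrow> cdiff_at H z"
  shows "holo_at H a"
proof -
  obtain U V where "open U" "a \<in> U" "\<forall>z\<in>U. cdiff_at F z" "open V" "a \<in> V" "\<forall>z\<in>V. cdiff_at G z"
    using assms(1,2) unfolding holo_at_iff by blast
  then show ?thesis
    unfolding holo_at_iff using assms(3) by (intro exI[of _ "U \<inter> V"]) auto
qed

lemma cdiff_at_linear:
  "cdiff_at (\<lambda>v. \<Sum>i\<in>UNIV. c$i * v$i) z"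
  unfolding cdiff_at_def
  by (intro exI[of _ c] bounded_linear_imp_has_derivative bounded_linear_sum
      bounded_linear_const_mult bounded_linear_vec_nth)

lemma holo_at_const: "holo_at (\<lambda>z. c) a"
  unfolding holo_at_iff cdiff_at_def
  by (intro exI[of _ UNIV]) (auto intro!: exI[of _ 0])

lemma holo_at_coord: "holo_at (\<lambda>z. z $ i) a"
proof -
  have "(\<Sum>j\<in>UNIV. axis i 1 $ j * v $ j) = v $ i" for v :: "complex^'a"
    by (simp add: axis_def if_distrib[of "\<lambda>c. c * _"] cong: if_cong)
  then have "(\<lambda>v::complex^'a. v $ i) = (\<lambda>v. \<Sum>j\<in>UNIV. axis i 1 $ j * v $ j)"
    by simp
  then show ?thesis
    unfolding holo_at_iff using cdiff_at_linear[of "axis i 1"] by (metis open_UNIV UNIV_I)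
qed

lemma holo_at_add:
  assumes "holo_at F a" "holo_at G a" shows "holo_at (\<lambda>z. F z + G z) a"
proof (rule holo_at_lift2[OF assms])
  fix z assume "cdiff_at F z" "cdiff_at G z"
  then obtain c d where "(F has_derivative (\<lambda>v. \<Sum>i\<in>UNIV. c$i * v$i)) (at z)"
    "(G has_derivative (\<lambda>v. \<Sum>i\<in>UNIV. d$i * v$i)) (at z)" unfolding cdiff_at_def by blast
  from has_derivative_add[OF this]
  have "((\<lambda>z. F z + G z) has_derivative (\<lambda>v. \<Sum>i\<in>UNIV. (c + d)$i * v$i)) (at z)"
    by (simp add: sum.distrib[symmetric] distrib_right)
  then show "cdiff_at (\<lambda>z. F z + G z) z" unfolding cdiff_at_def by blast
qed

lemma holo_at_mult:
  assumes "holo_at F a" "holo_at G a" shows "holo_at (\<lambda>z. F z * G z) a"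
proof (rule holo_at_lift2[OF assms])
  fix z assume "cdiff_at F z" "cdiff_at G z"
  then obtain c d where "(F has_derivative (\<lambda>v. \<Sum>i\<in>UNIV. c$i * v$i)) (at z)"
    "(G has_derivative (\<lambda>v. \<Sum>i\<in>UNIV. d$i * v$i)) (at z)" unfolding cdiff_at_def by blast
  from has_derivative_mult[OF this]
  have "((\<lambda>z. F z * G z) has_derivative (\<lambda>v. \<Sum>i\<in>UNIV. (F z *s d + G z *s c)$i * v$i)) (at z)"
    by (simp add: sum_distrib_left sum_distrib_right sum.distrib[symmetric] algebra_simps)
  then show "cdiff_at (\<lambda>z. F z * G z) z" unfolding cdiff_at_def by blast
qed

lemma holo_at_diff:
  assumes "holo_at F a" "holo_at G a" shows "holo_at (\<lambda>z. F z - G z) a"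
  using holo_at_add[OF assms(1) holo_at_mult[OF holo_at_const[of "-1"] assms(2)]] by simp

lemma holo_at_sum:
  "finite I \<Longrightarrow> (\<And>i. i \<in> I \<Longrightarrow> holo_at (F i) a) \<Longrightarrow> holo_at (\<lambda>z. \<Sum>i\<in>I. F i z) a"
  by (induction I rule: finite_induct) (auto intro: holo_at_const holo_at_add)

lemma holo_at_prod:
  "finite I \<Longrightarrow> (\<And>i. i \<in> I \<Longrightarrow> holo_at (F i) a) \<Longrightarrow> holo_at (\<lambda>z. \<Prod>i\<in>I. F i z) a"
  by (induction I rule: finite_induct) (auto intro: holo_at_const holo_at_mult)

lemma holo_at_compose_linear:
  fixes L :: "complex^'m \<Rightarrow> complex^'k"
  assumes L: "bounded_linear L" and f: "holo_at f (L a)"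
    and dot: "\<And>c. \<exists>d. \<forall>v. (\<Sum>i\<in>UNIV. c$i * L v $ i) = (\<Sum>i\<in>UNIV. d$i * v$i)"
  shows "holo_at (\<lambda>z. f (L z)) a"
proof -
  obtain U where U: "open U" "L a \<in> U" "\<forall>w\<in>U. cdiff_at f w"
    using f unfolding holo_at_iff by blast
  have "cdiff_at (\<lambda>z. f (L z)) z" if "L z \<in> U" for z
  proof -
    have "cdiff_at f (L z)" using U(3) that ..
    then obtain c where c: "(f has_derivative (\<lambda>v. \<Sum>i\<in>UNIV. c$i * v$i)) (at (L z))"
      unfolding cdiff_at_def ..
    obtain d where d: "\<forall>v. (\<Sum>i\<in>UNIV. c$i * L v $ i) = (\<Sum>i\<in>UNIV. d$i * v$i)"
      using dot[of c] ..
    have "((\<lambda>z. f (L z)) has_derivative (\<lambda>v. \<Sum>i\<in>UNIV. c$i * L v $ i)) (at z)"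
      using has_derivative_compose[OF bounded_linear_imp_has_derivative[OF L] c] by (simp add: comp_def)
    then show ?thesis
      unfolding cdiff_at_def d[rule_format] ..
  qed
  moreover have "open (L -` U)"
    by (rule continuous_open_vimage[OF U(1)]) (simp add: linear_continuous_at L)
  ultimately show ?thesis
    unfolding holo_at_iff using U(2) by (intro exI[of _ "L -` U"]) simp
qed

lemma sum_UNIV_Plus:
  "(\<Sum>j\<in>(UNIV::('a::finite + 'b::finite) set). g j) = (\<Sum>i\<in>UNIV. g (Inl i)) + (\<Sum>i\<in>UNIV. g (Inr i))"
  by (subst UNIV_Plus_UNIV[symmetric], subst sum.Plus) (auto simp: comp_def)

lemma bounded_linear_pr1: "bounded_linear (pr1 :: complex^('n::finite + 'n) \<Rightarrow> complex^'n)"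
  unfolding linear_conv_bounded_linear[symmetric]
  by (rule linearI) (auto simp: pr1_def Finite_Cartesian_Product.vec_eq_iff)

lemma bounded_linear_pr2: "bounded_linear (pr2 :: complex^('n::finite + 'n) \<Rightarrow> complex^'n)"
  unfolding linear_conv_bounded_linear[symmetric]
  by (rule linearI) (auto simp: pr2_def Finite_Cartesian_Product.vec_eq_iff)

lemma holo_at_pr1: "holo_at f (pr1 a) \<Longrightarrow> holo_at (\<lambda>z. f (pr1 z)) a"
proof (rule holo_at_compose_linear[OF bounded_linear_pr1])
  fix c :: "complex^'n"
  show "\<exists>d. \<forall>v. (\<Sum>i\<in>UNIV. c$i * pr1 v $ i) = (\<Sum>i\<in>UNIV. d$i * (v::complex^('n+'n))$i)"
    by (rule exI[of _ "\<chi> j. case j of Inl i \<Rightarrow> c$i | Inr _ \<Rightarrow> 0"]) (simp add: sum_UNIV_Plus pr1_def)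
qed

lemma holo_at_pr2: "holo_at f (pr2 a) \<Longrightarrow> holo_at (\<lambda>z. f (pr2 z)) a"
proof (rule holo_at_compose_linear[OF bounded_linear_pr2])
  fix c :: "complex^'n"
  show "\<exists>d. \<forall>v. (\<Sum>i\<in>UNIV. c$i * pr2 v $ i) = (\<Sum>i\<in>UNIV. d$i * (v::complex^('n+'n))$i)"
    by (rule exI[of _ "\<chi> j. case j of Inr i \<Rightarrow> c$i | Inl _ \<Rightarrow> 0"]) (simp add: sum_UNIV_Plus pr2_def)
qed

lemma pr1_diagpt [simp]: "pr1 (diagpt x) = x" and pr2_diagpt [simp]: "pr2 (diagpt x) = x"
  by (auto simp: pr1_def pr2_def diagpt_def Finite_Cartesian_Product.vec_eq_iff)

lemma open_vimage_pr1_pr2: "open W \<Longrightarrow> open W' \<Longrightarrow> open (pr1 -` W \<inter> pr2 -` W')"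
  by (intro open_Int continuous_open_vimage)
     (auto simp: linear_continuous_at bounded_linear_pr1 bounded_linear_pr2)

section \<open>Determinants\<close>

lemma detn_eq_det: "detn k A = Determinant.det (Matrix.mat k k (\<lambda>(i, j). A i j))"
  unfolding detn_def Determinant.det_def by (simp add: lessThan_atLeast0)

lemma detn_block_lower_left_zero:
  assumes "\<And>i j. k \<le> i \<Longrightarrow> i < k + m \<Longrightarrow> j < k \<Longrightarrow> A i j = 0"
  shows "detn (k + m) A = detn k A * detn m (\<lambda>i j. A (k + i) (k + j))"
proof -
  have "Matrix.mat (k + m) (k + m) (\<lambda>(i, j). A i j) =
     four_block_mat (Matrix.mat k k (\<lambda>(i, j). A i j)) (Matrix.mat k m (\<lambda>(i, j). A i (k + j)))
        (0\<^sub>m m k) (Matrix.mat m m (\<lambda>(i, j). A (k + i) (k + j)))"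
    by (rule eq_matI) (auto simp: index_mat_four_block assms)
  then show ?thesis
    unfolding detn_eq_det by (simp add: det_four_block_mat_lower_left_zero[of _ k _ m])
qed

lemma detn_mult_cols: "detn k (\<lambda>i j. c j * A i j) = (\<Prod>j<k. c j) * detn k A"
  unfolding detn_def sum_distrib_left
proof (intro sum.cong refl)
  fix p assume "p \<in> {p. p permutes {..<k}}"
  then have "(\<Prod>i<k. c (p i)) = (\<Prod>j<k. c j)"
    using prod.permute[of p "{..<k}" c] by (simp add: comp_def)
  then show "of_int (sign p) * (\<Prod>i<k. c (p i) * A i (p i)) =
        (\<Prod>j<k. c j) * (of_int (sign p) * (\<Prod>i<k. A i (p i)))"
    by (simp add: prod.distrib)
qed

lemma detn_2: "detn 2 A = A 0 0 * A 1 1 - A 0 1 * A 1 0"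
proof -
  have "{..<2::nat} = insert 0 {1}" by auto
  then show ?thesis
    unfolding detn_def
    by (simp only:, subst sum_over_permutations_insert) (auto simp: permutes_sing sign_swap_id sign_id swap_id_eq)
qed

lemma detn_2_vec2_rows:
  fixes r :: "nat \<Rightarrow> 2"
  obtains \<epsilon> where "\<And>v. detn 2 (\<lambda>i j. v j $ r i) = \<epsilon> * (v 0 $ 1 * v 1 $ 2 - v 1 $ 1 * v 0 $ 2)"
proof -
  consider "r 0 = r 1" | "r 0 = 1" "r 1 = 2" | "r 0 = 2" "r 1 = 1"
    using exhaust_2[of "r 0"] exhaust_2[of "r 1"] by metis
  then show ?thesis
  proof cases
    case 1
    then show ?thesis by (intro that[of 0]) (simp add: detn_2)
  next
    case 2
    then show ?thesis by (intro that[of 1]) (simp add: detn_2)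
  next
    case 3
    then show ?thesis by (intro that[of "-1"]) (simp add: detn_2)
  qed
qed

section \<open>Ideals of germs along a set\<close>

lemma in_ideal_at_holo: "in_ideal_at A a G F \<Longrightarrow> holo_at F a"
  unfolding in_ideal_at_def by blast

lemma in_ideal_at_gen: "g \<in> G \<Longrightarrow> holo_at g a \<Longrightarrow> in_ideal_at A a G g"
  unfolding in_ideal_at_def
  by (intro conjI exI[of _ "1::nat"] exI[of _ "\<lambda>_. g"] exI[of _ "\<lambda>_ _. 1"] exI[of _ UNIV])
     (auto intro: holo_at_const)

lemma in_ideal_at_zero: "in_ideal_at A a G (\<lambda>z. 0)"
  unfolding in_ideal_at_def
  by (intro conjI holo_at_const exI[of _ "0::nat"] exI[of _ UNIV]) auto

lemma sum_lessThan_add_split: "(\<Sum>i<m + (n::nat). f i) = (\<Sum>i<m. f i) + (\<Sum>i<n. f (m + i))"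
  by (induction n) (simp_all add: add.assoc)

lemma in_ideal_at_add:
  assumes "in_ideal_at A a G F1" "in_ideal_at A a G F2"
  shows "in_ideal_at A a G (\<lambda>z. F1 z + F2 z)"
proof -
  obtain N1 :: nat and gs1 cs1 W1 where 1: "holo_at F1 a" "open W1" "a \<in> W1"
    "\<forall>i<N1. gs1 i \<in> G \<and> holo_at (cs1 i) a" "\<forall>z\<in>W1 \<inter> A. F1 z = (\<Sum>i<N1. cs1 i z * gs1 i z)"
    using assms(1) unfolding in_ideal_at_def by blast
  obtain N2 :: nat and gs2 cs2 W2 where 2: "holo_at F2 a" "open W2" "a \<in> W2"
    "\<forall>i<N2. gs2 i \<in> G \<and> holo_at (cs2 i) a" "\<forall>z\<in>W2 \<inter> A. F2 z = (\<Sum>i<N2. cs2 i z * gs2 i z)"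
    using assms(2) unfolding in_ideal_at_def by blast
  define gs where "gs i = (if i < N1 then gs1 i else gs2 (i - N1))" for i
  define cs where "cs i = (if i < N1 then cs1 i else cs2 (i - N1))" for i
  show ?thesis unfolding in_ideal_at_def
    by (intro conjI holo_at_add 1(1) 2(1) exI[of _ "N1 + N2"] exI[of _ gs] exI[of _ cs]
        exI[of _ "W1 \<inter> W2"]) (use 1 2 in \<open>auto simp: sum_lessThan_add_split gs_def cs_def\<close>)
qed

lemma in_ideal_at_mult:
  assumes "holo_at c a" "in_ideal_at A a G F"
  shows "in_ideal_at A a G (\<lambda>z. c z * F z)"
proof -
  obtain N :: nat and gs cs W where F: "holo_at F a" "open W" "a \<in> W"
    "\<forall>i<N. gs i \<in> G \<and> holo_at (cs i) a" "\<forall>z\<in>W \<inter> A. F z = (\<Sum>i<N. cs i z * gs i z)"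
    using assms(2) unfolding in_ideal_at_def by blast
  show ?thesis unfolding in_ideal_at_def
    by (intro conjI holo_at_mult assms(1) F(1) exI[of _ N] exI[of _ gs]
        exI[of _ "\<lambda>i z. c z * cs i z"] exI[of _ W])
       (use F assms(1) in \<open>auto intro!: holo_at_mult simp: sum_distrib_left mult.assoc\<close>)
qed

lemma in_ideal_at_sum:
  "finite I \<Longrightarrow> (\<And>i. i \<in> I \<Longrightarrow> in_ideal_at A a G (F i)) \<Longrightarrow> in_ideal_at A a G (\<lambda>z. \<Sum>i\<in>I. F i z)"
  by (induction I rule: finite_induct) (auto intro: in_ideal_at_zero in_ideal_at_add)

lemma in_ideal_at_local_cong:
  assumes "in_ideal_at A a G F" "holo_at F' a" "open V" "a \<in> V"
    and "\<And>z. z \<in> V \<Longrightarrow> z \<in> A \<Longrightarrow> F' z = F z"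
  shows "in_ideal_at A a G F'"
proof -
  obtain N :: nat and gs cs W where F: "open W" "a \<in> W"
    "\<forall>i<N. gs i \<in> G \<and> holo_at (cs i) a" "\<forall>z\<in>W \<inter> A. F z = (\<Sum>i<N. cs i z * gs i z)"
    using assms(1) unfolding in_ideal_at_def by blast
  have "\<forall>z\<in>(W \<inter> V) \<inter> A. F' z = (\<Sum>i<N. cs i z * gs i z)"
    using F(4) assms(5) by simp
  then show ?thesis unfolding in_ideal_at_def
    by (intro conjI assms(2) exI[of _ N] exI[of _ gs] exI[of _ cs] exI[of _ "W \<inter> V"])
       (use F(1-3) assms(3,4) in auto)
qed

lemma in_ideal_at_trans:
  assumes "in_ideal_at A a G F" "\<And>g. g \<in> G \<Longrightarrow> in_ideal_at A a G' g"
  shows "in_ideal_at A a G' F"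
proof -
  obtain N :: nat and gs cs W where F: "holo_at F a" "open W" "a \<in> W"
    "\<forall>i<N. gs i \<in> G \<and> holo_at (cs i) a" "\<forall>z\<in>W \<inter> A. F z = (\<Sum>i<N. cs i z * gs i z)"
    using assms(1) unfolding in_ideal_at_def by blast
  have "in_ideal_at A a G' (\<lambda>z. \<Sum>i<N. cs i z * gs i z)"
    using F(4) assms(2) by (intro in_ideal_at_sum in_ideal_at_mult) auto
  then show ?thesis
    by (rule in_ideal_at_local_cong[OF _ F(1-3)]) (use F(5) in blast)
qed

section \<open>Minors of doubled modules\<close>

definition diff_col :: "(complex^'n \<Rightarrow> complex) \<Rightarrow> (complex^'n \<Rightarrow> complex^'p)
     \<Rightarrow> complex^('n + 'n) \<Rightarrow> complex^('p + 'p)" where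
  "diff_col c f z = (\<chi> j. case j of Inl i \<Rightarrow> (c (pr1 z) - c (pr2 z)) * f (pr1 z) $ i | Inr i \<Rightarrow> 0)"

definition diff_prod :: "nat \<Rightarrow> (nat \<Rightarrow> complex^'n \<Rightarrow> complex) \<Rightarrow> complex^('n + 'n) \<Rightarrow> complex" where
  "diff_prod k c z = (\<Prod>l<k. c l (pr1 z) - c l (pr2 z))"

definition dbl_minor :: "(complex^'n \<Rightarrow> complex) \<Rightarrow> (complex^'n \<Rightarrow> complex)
     \<Rightarrow> complex^('n + 'n) \<Rightarrow> complex" where
  "dbl_minor h h' z = h (pr1 z) * h' (pr2 z) - h' (pr1 z) * h (pr2 z)"

lemma dbl_in_modD: "f \<in> M \<Longrightarrow> dbl f \<in> modD x M"
  unfolding modD_def gen_module_def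
  by (intro CollectI exI[of _ "1::nat"] exI[of _ "\<lambda>_. dbl f"] exI[of _ "\<lambda>_ _. 1"])
     (auto intro: holo_at_const)

lemma diff_col_in_modD:
  assumes M: "germ_submodule x M" and c: "holo_at c x" and f: "f \<in> M"
  shows "diff_col c f \<in> modD x M"
proof -
  define hs where "hs i = (if i = 0 then dbl (\<lambda>w. c w *s f w) else dbl f)" for i :: nat
  define cs where "cs i = (if i = 0 then (\<lambda>z. 1) else (\<lambda>z. - c (pr2 z)))" for i :: nat
  have "(\<lambda>w. c w *s f w) \<in> M" using M c f unfolding germ_submodule_def by blast
  moreover have "holo_at c (pr2 (diagpt x))"
    using c by simp
  from holo_at_diff[OF holo_at_const[of 0] holo_at_pr2[OF this]]
  have "holo_at (\<lambda>z. - c (pr2 z)) (diagpt x)"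
    by simp
  ultimately have "\<forall>i<2. hs i \<in> dbl ` M \<and> holo_at (cs i) (diagpt x)"
    using f by (auto simp: hs_def cs_def intro: holo_at_const)
  moreover have "diff_col c f = (\<lambda>z. \<Sum>i<2. cs i z *s hs i z)"
  proof (intro ext iffD2[OF Finite_Cartesian_Product.vec_eq_iff] allI)
    fix z j
    show "diff_col c f z $ j = (\<Sum>i<2. cs i z *s hs i z) $ j"
      by (cases j) (simp_all add: numeral_2_eq_2 diff_col_def hs_def cs_def dbl_def algebra_simps)
  qed
  ultimately show ?thesis
    unfolding modD_def gen_module_def by blast
qed

lemma holo_at_diff_prod:
  "(\<And>l. l < k \<Longrightarrow> holo_at (c l) x) \<Longrightarrow> holo_at (diff_prod k c) (diagpt x)"
  unfolding diff_prod_def by (intro holo_at_prod holo_at_diff holo_at_pr1 holo_at_pr2) auto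

lemma holo_at_minor:
  assumes M: "germ_submodule x M" and hs: "\<And>j. j < k \<Longrightarrow> hs j \<in> M"
  shows "holo_at (\<lambda>w. detn k (\<lambda>i j. hs j w $ r i)) x"
  unfolding detn_def
proof (intro holo_at_sum holo_at_mult holo_at_const holo_at_prod finite_permutations finite_lessThan)
  fix p i assume "p \<in> {p. p permutes {..<k}}" "i \<in> {..<k}"
  then have "p i < k" using permutes_in_image by fastforce
  then show "holo_at (\<lambda>w. hs (p i) w $ r i) x"
    using M hs unfolding germ_submodule_def by blast
qed

lemma diff_prod_minors_in_minors:
  assumes M: "germ_submodule x M" and c: "\<And>l. l < k \<Longrightarrow> holo_at (c l) x"
    and f: "\<And>l. l < k \<Longrightarrow> f l \<in> M" and f': "\<And>l. l < k \<Longrightarrow> f' l \<in> M"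
  shows "(\<lambda>z. diff_prod k c z * detn k (\<lambda>i j. f j (pr1 z) $ R i) * detn k (\<lambda>i j. f' j (pr2 z) $ R' i))
           \<in> minors (2 * k) (modD x M)"
proof -
  define hs where "hs j = (if j < k then diff_col (c j) (f j) else dbl (f' (j - k)))" for j
  define r where "r i = (if i < k then Inl (R i) else Inr (R' (i - k)))" for i
  have "hs j \<in> modD x M" if "j < 2 * k" for j
    using that diff_col_in_modD[OF M c f] dbl_in_modD[OF f'[of "j - k"]] by (auto simp: hs_def)
  moreover have "diff_prod k c z * detn k (\<lambda>i j. f j (pr1 z) $ R i) * detn k (\<lambda>i j. f' j (pr2 z) $ R' i)
      = detn (2 * k) (\<lambda>i j. hs j z $ r i)" for z
  proof -
    let ?A = "\<lambda>i j. hs j z $ r i"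
    have "detn (2 * k) ?A = detn k ?A * detn k (\<lambda>i j. ?A (k + i) (k + j))"
      unfolding mult_2 by (rule detn_block_lower_left_zero) (simp add: hs_def r_def diff_col_def)
    also have "detn k ?A = detn k (\<lambda>i j. (c j (pr1 z) - c j (pr2 z)) * f j (pr1 z) $ R i)"
      unfolding detn_def
      by (intro sum.cong refl arg_cong2[where f = "(*)"] prod.cong)
         (auto simp: hs_def r_def diff_col_def dest: permutes_in_image)
    also have "\<dots> = diff_prod k c z * detn k (\<lambda>i j. f j (pr1 z) $ R i)"
      unfolding diff_prod_def by (rule detn_mult_cols)
    also have "detn k (\<lambda>i j. ?A (k + i) (k + j)) = detn k (\<lambda>i j. f' j (pr2 z) $ R' i)"
      by (simp add: hs_def r_def dbl_def)
    finally show ?thesis by simp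
  qed
  ultimately show ?thesis
    unfolding minors_def by blast
qed

lemma JidealE:
  assumes "h \<in> Jideal X x k M"
  obtains N :: nat and cs hs r W where "holo_at h x" "open W" "x \<in> W"
    "\<And>i. i < N \<Longrightarrow> holo_at (cs i) x" "\<And>i j. i < N \<Longrightarrow> j < k \<Longrightarrow> hs i j \<in> M"
    "\<And>z. z \<in> W \<Longrightarrow> z \<in> X \<Longrightarrow> h z = (\<Sum>i<N. cs i z * detn k (\<lambda>a b. hs i b z $ r i a))"
proof -
  obtain N :: nat and gs cs W where h: "holo_at h x" "open W" "x \<in> W"
    "\<forall>i<N. gs i \<in> minors k M \<and> holo_at (cs i) x" "\<forall>z\<in>W \<inter> X. h z = (\<Sum>i<N. cs i z * gs i z)"
    using assms unfolding Jideal_def in_ideal_at_def by blast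
  have "\<forall>i. \<exists>hs r. i < N \<longrightarrow> gs i = (\<lambda>z. detn k (\<lambda>a b. hs b z $ r a)) \<and> (\<forall>j<k. hs j \<in> M)"
    using h(4) unfolding minors_def by blast
  then obtain hs r where "\<And>i. i < N \<Longrightarrow> gs i = (\<lambda>z. detn k (\<lambda>a b. hs i b z $ r i a)) \<and> (\<forall>j<k. hs i j \<in> M)"
    by metis
  with h show ?thesis
    by (intro that[of W N cs hs r]) auto
qed

lemma diff_prod_tensor_in_Jideal:
  assumes M: "germ_submodule x M" and c: "\<And>l. l < k \<Longrightarrow> holo_at (c l) x"
    and h: "h \<in> Jideal X x k M" and h': "h' \<in> Jideal X x k M"
  shows "in_ideal_at (sqset X) (diagpt x) (minors (2 * k) (modD x M))
     (\<lambda>z. diff_prod k c z * h (pr1 z) * h' (pr2 z))"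
proof -
  obtain W and N :: nat and cs hs r where 1: "holo_at h x" "open W" "x \<in> W"
    "\<And>i. i < N \<Longrightarrow> holo_at (cs i) x" "\<And>i j. i < N \<Longrightarrow> j < k \<Longrightarrow> hs i j \<in> M"
    "\<And>z. z \<in> W \<Longrightarrow> z \<in> X \<Longrightarrow> h z = (\<Sum>i<N. cs i z * detn k (\<lambda>a b. hs i b z $ r i a))"
    using h by (rule JidealE) blast
  obtain W' and N' :: nat and cs' hs' r' where 2: "holo_at h' x" "open W'" "x \<in> W'"
    "\<And>i. i < N' \<Longrightarrow> holo_at (cs' i) x" "\<And>i j. i < N' \<Longrightarrow> j < k \<Longrightarrow> hs' i j \<in> M"
    "\<And>z. z \<in> W' \<Longrightarrow> z \<in> X \<Longrightarrow> h' z = (\<Sum>i<N'. cs' i z * detn k (\<lambda>a b. hs' i b z $ r' i a))"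
    using h' by (rule JidealE) blast
  define m where "m i w = detn k (\<lambda>a b. hs i b w $ r i a)" for i w
  define m' where "m' j w = detn k (\<lambda>a b. hs' j b w $ r' j a)" for j w
  let ?E = "\<lambda>z. \<Sum>i<N. \<Sum>j<N'. (cs i (pr1 z) * cs' j (pr2 z)) * (diff_prod k c z * m i (pr1 z) * m' j (pr2 z))"
  have "in_ideal_at (sqset X) (diagpt x) (minors (2 * k) (modD x M))
     (\<lambda>z. (cs i (pr1 z) * cs' j (pr2 z)) * (diff_prod k c z * m i (pr1 z) * m' j (pr2 z)))"
    if i: "i < N" and j: "j < N'" for i j
  proof (rule in_ideal_at_mult[OF _ in_ideal_at_gen])
    show "holo_at (\<lambda>z. cs i (pr1 z) * cs' j (pr2 z)) (diagpt x)"
      using 1(4) 2(4) i j by (intro holo_at_mult holo_at_pr1 holo_at_pr2) auto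
    show "(\<lambda>z. diff_prod k c z * m i (pr1 z) * m' j (pr2 z)) \<in> minors (2 * k) (modD x M)"
      unfolding m_def m'_def by (rule diff_prod_minors_in_minors[OF M c]) (use 1(5) 2(5) i j in auto)
    have "holo_at (m i) x" "holo_at (m' j) x"
      unfolding m_def m'_def using 1(5) 2(5) i j by (auto intro!: holo_at_minor[OF M])
    then show "holo_at (\<lambda>z. diff_prod k c z * m i (pr1 z) * m' j (pr2 z)) (diagpt x)"
      by (intro holo_at_mult holo_at_diff_prod c holo_at_pr1 holo_at_pr2) simp_all
  qed
  then have "in_ideal_at (sqset X) (diagpt x) (minors (2 * k) (modD x M)) ?E"
    by (intro in_ideal_at_sum finite_lessThan) simp
  then show ?thesis
  proof (rule in_ideal_at_local_cong)
    show "holo_at (\<lambda>z. diff_prod k c z * h (pr1 z) * h' (pr2 z)) (diagpt x)"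
      by (intro holo_at_mult holo_at_diff_prod c holo_at_pr1 holo_at_pr2) (simp_all add: 1 2)
    show "open (pr1 -` W \<inter> pr2 -` W')" using 1 2 by (intro open_vimage_pr1_pr2)
    show "diagpt x \<in> pr1 -` W \<inter> pr2 -` W'" using 1 2 by simp
    fix z assume "z \<in> pr1 -` W \<inter> pr2 -` W'" "z \<in> sqset X"
    then have "h (pr1 z) = (\<Sum>i<N. cs i (pr1 z) * m i (pr1 z))"
      "h' (pr2 z) = (\<Sum>j<N'. cs' j (pr2 z) * m' j (pr2 z))"
      using 1(6) 2(6) by (auto simp: sqset_def m_def m'_def)
    then show "diff_prod k c z * h (pr1 z) * h' (pr2 z) = ?E z"
      by (simp add: sum_product sum_distrib_left mult_ac)
  qed
qed

lemma diff_prod_dbl_minor_in_Jideal: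
  assumes M: "germ_submodule x M" and c: "\<And>l. l < k \<Longrightarrow> holo_at (c l) x"
    and h: "h \<in> Jideal X x k M" and h': "h' \<in> Jideal X x k M"
  shows "in_ideal_at (sqset X) (diagpt x) (minors (2 * k) (modD x M))
     (\<lambda>z. diff_prod k c z * dbl_minor h h' z)"
proof -
  have "in_ideal_at (sqset X) (diagpt x) (minors (2 * k) (modD x M))
     (\<lambda>z. diff_prod k c z * h (pr1 z) * h' (pr2 z) + (-1) * (diff_prod k c z * h' (pr1 z) * h (pr2 z)))"
    by (intro in_ideal_at_add in_ideal_at_mult holo_at_const diff_prod_tensor_in_Jideal M c h h')
  then show ?thesis
    by (simp add: dbl_minor_def algebra_simps)
qed

lemma sum_product_diff:
  fixes c0 p q' :: "'i \<Rightarrow> 'a::comm_ring" and c1 q p' :: "'j \<Rightarrow> 'a"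
  shows "(\<Sum>a\<in>A. c0 a * p a) * (\<Sum>b\<in>B. c1 b * q b) - (\<Sum>b\<in>B. c1 b * p' b) * (\<Sum>a\<in>A. c0 a * q' a)
    = (\<Sum>a\<in>A. \<Sum>b\<in>B. (c0 a * c1 b) * (p a * q b - p' b * q' a))"
proof -
  have swap: "(\<Sum>b\<in>B. c1 b * p' b) * (\<Sum>a\<in>A. c0 a * q' a) = (\<Sum>a\<in>A. \<Sum>b\<in>B. (c1 b * p' b) * (c0 a * q' a))"
    unfolding sum_product by (rule sum.swap)
  have prod: "(\<Sum>a\<in>A. c0 a * p a) * (\<Sum>b\<in>B. c1 b * q b) = (\<Sum>a\<in>A. \<Sum>b\<in>B. (c0 a * p a) * (c1 b * q b))"
    by (rule sum_product)
  show ?thesis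
    unfolding swap prod sum_subtractf[symmetric] by (intro sum.cong refl) (simp add: algebra_simps)
qed

lemma idealDE:
  assumes "G \<in> idealD x J"
  obtains N :: nat and cs h where "\<And>i. i < N \<Longrightarrow> h i \<in> J" "\<And>i. i < N \<Longrightarrow> holo_at (cs i) (diagpt x)"
    "G = (\<lambda>z. \<Sum>i<N. cs i z *s dblS (h i) z)"
proof -
  obtain N :: nat and hs cs where G: "\<forall>i<N. hs i \<in> dblS ` J \<and> holo_at (cs i) (diagpt x)"
     "G = (\<lambda>z. \<Sum>i<N. cs i z *s hs i z)"
    using assms unfolding idealD_def gen_module_def by blast
  have "\<forall>i. \<exists>h. i < N \<longrightarrow> h \<in> J \<and> hs i = dblS h" using G(1) by blast
  then obtain h where "\<And>i. i < N \<Longrightarrow> h i \<in> J \<and> hs i = dblS (h i)" by metis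
  with G show ?thesis
    by (intro that[of N h cs]) auto
qed

lemma minor2_idealD_in_ideal:
  assumes \<pi>: "holo_at \<pi> (diagpt x)"
    and dbl_minor: "\<And>h h'. h \<in> J \<Longrightarrow> h' \<in> J \<Longrightarrow> in_ideal_at S (diagpt x) T (\<lambda>z. \<pi> z * dbl_minor h h' z)"
    and \<mu>: "\<mu> \<in> minors 2 (idealD x J)"
  shows "in_ideal_at S (diagpt x) T (\<lambda>z. \<pi> z * \<mu> z)"
proof -
  obtain G r where G: "\<And>j. j < 2 \<Longrightarrow> G j \<in> idealD x J" and \<mu>_eq: "\<mu> = (\<lambda>z. detn 2 (\<lambda>i j. G j z $ r i))"
    using \<mu> unfolding minors_def by blast
  obtain N0 :: nat and c0 h0 where 0: "\<And>i. i < N0 \<Longrightarrow> h0 i \<in> J"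
    "\<And>i. i < N0 \<Longrightarrow> holo_at (c0 i) (diagpt x)" "G 0 = (\<lambda>z. \<Sum>i<N0. c0 i z *s dblS (h0 i) z)"
    by (rule idealDE[OF G[of 0]]) (simp, blast)
  obtain N1 :: nat and c1 h1 where 1: "\<And>i. i < N1 \<Longrightarrow> h1 i \<in> J"
    "\<And>i. i < N1 \<Longrightarrow> holo_at (c1 i) (diagpt x)" "G 1 = (\<lambda>z. \<Sum>i<N1. c1 i z *s dblS (h1 i) z)"
    by (rule idealDE[OF G[of 1]]) (simp, blast)
  obtain \<epsilon> where \<epsilon>: "\<And>v. detn 2 (\<lambda>i j. v j $ r i) = \<epsilon> * (v 0 $ 1 * v 1 $ 2 - v 1 $ 1 * v 0 $ 2)"
    by (rule detn_2_vec2_rows[of r]) blast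
  have "\<pi> z * \<mu> z = \<epsilon> * (\<Sum>a<N0. \<Sum>b<N1. (c0 a z * c1 b z) * (\<pi> z * dbl_minor (h0 a) (h1 b) z))" for z
  proof -
    have "\<mu> z = \<epsilon> * ((\<Sum>a<N0. c0 a z * h0 a (pr1 z)) * (\<Sum>b<N1. c1 b z * h1 b (pr2 z))
        - (\<Sum>b<N1. c1 b z * h1 b (pr1 z)) * (\<Sum>a<N0. c0 a z * h0 a (pr2 z)))"
      unfolding \<mu>_eq \<epsilon> 0(3) 1(3) by (simp add: sum_component dblS_def)
    then show ?thesis
      unfolding sum_product_diff by (simp add: dbl_minor_def sum_distrib_left mult_ac)
  qed
  moreover have "in_ideal_at S (diagpt x) T
      (\<lambda>z. \<epsilon> * (\<Sum>a<N0. \<Sum>b<N1. (c0 a z * c1 b z) * (\<pi> z * dbl_minor (h0 a) (h1 b) z)))"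
    using 0(1,2) 1(1,2)
    by (intro in_ideal_at_mult[OF holo_at_const] in_ideal_at_sum in_ideal_at_mult[OF holo_at_mult]
        dbl_minor finite_lessThan) auto
  ultimately show ?thesis
    by simp
qed

lemma diag_pow_timesE:
  assumes "g \<in> diag_pow_times j G"
  obtains \<iota> \<mu> where "\<mu> \<in> G" "g = (\<lambda>z. diff_prod j (\<lambda>l w. w $ \<iota> l) z * \<mu> z)"
  using assms unfolding diag_pow_times_def diff_prod_def by (auto simp: pr1_def pr2_def)

lemma in_ideal_diag_pow_times_minor2:
  assumes dbl_minor: "\<And>c h h'. (\<And>l. l < j \<Longrightarrow> holo_at (c l) x) \<Longrightarrow> h \<in> J \<Longrightarrow> h' \<in> J \<Longrightarrow>
      in_ideal_at S (diagpt x) T (\<lambda>z. diff_prod j c z * dbl_minor h h' z)"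
    and F: "in_ideal_at S (diagpt x) (diag_pow_times j (minors 2 (idealD x J))) F"
  shows "in_ideal_at S (diagpt x) T F"
proof (rule in_ideal_at_trans[OF F])
  fix g assume "g \<in> diag_pow_times j (minors 2 (idealD x J))"
  then obtain \<iota> \<mu> where \<mu>: "\<mu> \<in> minors 2 (idealD x J)"
    and g: "g = (\<lambda>z. diff_prod j (\<lambda>l w. w $ \<iota> l) z * \<mu> z)"
    by (rule diag_pow_timesE)
  show "in_ideal_at S (diagpt x) T g"
    unfolding g
    by (rule minor2_idealD_in_ideal[OF holo_at_diff_prod dbl_minor \<mu>]) (simp_all add: holo_at_coord)
qed

lemma in_principal_idealE:
  assumes "in_ideal_at X x {g} h"
  obtains a W where "holo_at a x" "open W" "x \<in> W" "\<And>z. z \<in> W \<Longrightarrow> z \<in> X \<Longrightarrow> h z = a z * g z"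
proof -
  obtain N :: nat and gs cs W where h: "open W" "x \<in> W" "\<forall>i<N. gs i \<in> {g} \<and> holo_at (cs i) x"
    "\<forall>z\<in>W \<inter> X. h z = (\<Sum>i<N. cs i z * gs i z)"
    using assms unfolding in_ideal_at_def by blast
  show ?thesis
  proof (rule that[of "\<lambda>z. \<Sum>i<N. cs i z" W])
    show "holo_at (\<lambda>z. \<Sum>i<N. cs i z) x" using h(3) by (intro holo_at_sum) auto
    fix z assume "z \<in> W" "z \<in> X"
    then show "h z = (\<Sum>i<N. cs i z) * g z" using h(3,4) by (simp add: sum_distrib_right)
  qed (use h in auto)
qed

lemma diff_prod_dbl_minor_in_Jideal_principal:
  assumes M: "germ_submodule x M" and c: "\<And>l. l < k \<Longrightarrow> holo_at (c l) x" and g: "holo_at g x"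
    and J: "Jideal X x (Suc k) M = {F. in_ideal_at X x {g} F}"
    and h: "h \<in> Jideal X x (Suc k) M" and h': "h' \<in> Jideal X x (Suc k) M"
  shows "in_ideal_at (sqset X) (diagpt x) (minors (2 * Suc k) (modD x M))
     (\<lambda>z. diff_prod k c z * dbl_minor h h' z)"
proof -
  let ?T = "minors (2 * Suc k) (modD x M)"
  have gJ: "g \<in> Jideal X x (Suc k) M"
    unfolding J by (simp add: in_ideal_at_gen g)
  have diff: "in_ideal_at (sqset X) (diagpt x) ?T
      (\<lambda>z. diff_prod k c z * (a (pr1 z) - a (pr2 z)) * g (pr1 z) * g (pr2 z))"
    if a: "holo_at a x" for a
  proof -
    have "in_ideal_at (sqset X) (diagpt x) ?T (\<lambda>z. diff_prod (Suc k) (c(k := a)) z * g (pr1 z) * g (pr2 z))"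
      by (rule diff_prod_tensor_in_Jideal[OF M _ gJ gJ]) (simp add: c a)
    moreover have "diff_prod (Suc k) (c(k := a)) = (\<lambda>z. diff_prod k c z * (a (pr1 z) - a (pr2 z)))"
      by (simp add: diff_prod_def fun_eq_iff)
    ultimately show ?thesis
      by simp
  qed
  obtain a Wa where a: "holo_at a x" "open Wa" "x \<in> Wa" "\<And>z. z \<in> Wa \<Longrightarrow> z \<in> X \<Longrightarrow> h z = a z * g z"
    using h unfolding J by (auto elim: in_principal_idealE)
  obtain b Wb where b: "holo_at b x" "open Wb" "x \<in> Wb" "\<And>z. z \<in> Wb \<Longrightarrow> z \<in> X \<Longrightarrow> h' z = b z * g z"
    using h' unfolding J by (auto elim: in_principal_idealE)
  have "holo_at (\<lambda>z. b (pr2 z)) (diagpt x)" "holo_at (\<lambda>z. - a (pr2 z)) (diagpt x)"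
    using holo_at_pr2[of b] holo_at_pr2[of "\<lambda>z. - a z"] holo_at_diff[OF holo_at_const[of 0] a(1)] b(1)
    by simp_all
  then have "in_ideal_at (sqset X) (diagpt x) ?T
      (\<lambda>z. b (pr2 z) * (diff_prod k c z * (a (pr1 z) - a (pr2 z)) * g (pr1 z) * g (pr2 z))
         + - a (pr2 z) * (diff_prod k c z * (b (pr1 z) - b (pr2 z)) * g (pr1 z) * g (pr2 z)))"
    by (intro in_ideal_at_add in_ideal_at_mult diff a(1) b(1))
  then show ?thesis
  proof (rule in_ideal_at_local_cong)
    have "holo_at h x" "holo_at h' x"
      using h h' unfolding J by (auto dest: in_ideal_at_holo)
    then show "holo_at (\<lambda>z. diff_prod k c z * dbl_minor h h' z) (diagpt x)"
      unfolding dbl_minor_def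
      by (intro holo_at_mult holo_at_diff holo_at_diff_prod c holo_at_pr1 holo_at_pr2) simp_all
    show "open (pr1 -` (Wa \<inter> Wb) \<inter> pr2 -` (Wa \<inter> Wb))"
      using a b by (intro open_vimage_pr1_pr2) auto
    show "diagpt x \<in> pr1 -` (Wa \<inter> Wb) \<inter> pr2 -` (Wa \<inter> Wb)"
      using a b by simp
    fix z assume "z \<in> pr1 -` (Wa \<inter> Wb) \<inter> pr2 -` (Wa \<inter> Wb)" "z \<in> sqset X"
    then have "h (pr1 z) = a (pr1 z) * g (pr1 z)" "h (pr2 z) = a (pr2 z) * g (pr2 z)"
      "h' (pr1 z) = b (pr1 z) * g (pr1 z)" "h' (pr2 z) = b (pr2 z) * g (pr2 z)"
      using a(4) b(4) by (auto simp: sqset_def)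
    then show "diff_prod k c z * dbl_minor h h' z =
        b (pr2 z) * (diff_prod k c z * (a (pr1 z) - a (pr2 z)) * g (pr1 z) * g (pr2 z))
         + - a (pr2 z) * (diff_prod k c z * (b (pr1 z) - b (pr2 z)) * g (pr1 z) * g (pr2 z))"
      by (simp add: dbl_minor_def algebra_simps)
  qed
qed

lemma Jideal_diag_pow_times_minor2:
  assumes M: "germ_submodule x M"
    and F: "in_ideal_at (sqset X) (diagpt x) (diag_pow_times k (minors 2 (idealD x (Jideal X x k M)))) F"
  shows "F \<in> Jideal (sqset X) (diagpt x) (2 * k) (modD x M)"
  unfolding Jideal_def
  by (rule CollectI, rule in_ideal_diag_pow_times_minor2[OF diff_prod_dbl_minor_in_Jideal[OF M] F])

lemma Jideal_diag_pow_times_minor2_principal: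
  assumes M: "germ_submodule x M" and g: "holo_at g x"
    and J: "Jideal X x k M = {F. in_ideal_at X x {g} F}"
    and F: "in_ideal_at (sqset X) (diagpt x) (diag_pow_times (k - 1) (minors 2 (idealD x (Jideal X x k M)))) F"
  shows "F \<in> Jideal (sqset X) (diagpt x) (2 * k) (modD x M)"
proof (cases k)
  case 0
  then show ?thesis
    using Jideal_diag_pow_times_minor2[OF M, of X 0 F] F by simp
next
  case (Suc k')
  then have J': "Jideal X x (Suc k') M = {F. in_ideal_at X x {g} F}"
    and F': "in_ideal_at (sqset X) (diagpt x) (diag_pow_times k' (minors 2 (idealD x (Jideal X x (Suc k') M)))) F"
    using J F by simp_all
  show ?thesis
    unfolding Jideal_def Suc
    by (rule CollectI, rule in_ideal_diag_pow_times_minor2[OF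
          diff_prod_dbl_minor_in_Jideal_principal[OF M _ g J'] F'])
qed

theorem lemmaL4p20:
  fixes X :: "(complex^'n) set" and x :: "complex^'n"
    and M :: "(complex^'n \<Rightarrow> complex^'p) set" and k :: nat
  assumes "analytic_set X" and "x \<in> X" and "germ_submodule x M"
  shows "(\<forall>F. in_ideal_at (sqset X) (diagpt x)
              (diag_pow_times k (minors 2 (idealD x (Jideal X x k M)))) F
            \<longrightarrow> F \<in> Jideal (sqset X) (diagpt x) (2 * k) (modD x M))
       \<and> ((\<exists>g. holo_at g x \<and> Jideal X x k M = {F. in_ideal_at X x {g} F}) \<longrightarrow>
          (\<forall>F. in_ideal_at (sqset X) (diagpt x)
              (diag_pow_times (k - 1) (minors 2 (idealD x (Jideal X x k M)))) F
            \<longrightarrow> F \<in> Jideal (sqset X) (diagpt x) (2 * k) (modD x M)))"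
  using Jideal_diag_pow_times_minor2[OF assms(3)] Jideal_diag_pow_times_minor2_principal[OF assms(3)]
  by blast

end
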